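(* If $G$ is a finite connected interval graph, then the subgraph of $G$ induced by the vertices of positive weight is a disjoint union of paths.
   Context: A finite simple graph is an interval graph iff its vertices can be assigned (closed, bounded) real intervals so that two vertices are adjacent iff their intervals intersect. A local component at a vertex $z$ is a connected component of $G\setminus\{z\}$; it is exterior iff it contains a vertex not adjacent to $z$. If $z$ has $n$ local components, the weight $\mathrm{wt}(z)$ is the sum of the $n-2$ smallest orders among the non-exterior local components at $z$ ($0$ if $n\le 2$). *)

theory Defs
  imports Complex_Main "HOL-Library.Multiset"
begin

definition simple_graph :: "'a set \<Rightarrow> ('a \<Rightarrow> 'a \<Rightarrow> bool) \<Rightarrow> bool" where
  "simple_graph V E \<longleftrightarrow> finite V \<and> (\<forall>u v. E u v \<longrightarrow> u \<in> V \<and> v \<in> V)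
     \<and> (\<forall>u v. E u v \<longrightarrow> E v u) \<and> (\<forall>v. \<not> E v v)"

definition reach_in :: "('a \<Rightarrow> 'a \<Rightarrow> bool) \<Rightarrow> 'a set \<Rightarrow> 'a \<Rightarrow> 'a \<Rightarrow> bool" where
  "reach_in E W = (\<lambda>u v. u \<in> W \<and> v \<in> W \<and> E u v)\<^sup>*\<^sup>*"

definition connected_graph :: "'a set \<Rightarrow> ('a \<Rightarrow> 'a \<Rightarrow> bool) \<Rightarrow> bool" where
  "connected_graph V E \<longleftrightarrow> V \<noteq> {} \<and> (\<forall>u\<in>V. \<forall>v\<in>V. reach_in E V u v)"

definition components_in :: "('a \<Rightarrow> 'a \<Rightarrow> bool) \<Rightarrow> 'a set \<Rightarrow> 'a set set" where
  "components_in E W = {{y. reach_in E W x y} | x. x \<in> W}"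

definition interval_graph :: "'a set \<Rightarrow> ('a \<Rightarrow> 'a \<Rightarrow> bool) \<Rightarrow> bool" where
  "interval_graph V E \<longleftrightarrow> (\<exists>l r :: 'a \<Rightarrow> real. (\<forall>v\<in>V. l v \<le> r v) \<and>
     (\<forall>u\<in>V. \<forall>v\<in>V. u \<noteq> v \<longrightarrow> (E u v \<longleftrightarrow> {l u..r u} \<inter> {l v..r v} \<noteq> {})))"

definition local_components :: "'a set \<Rightarrow> ('a \<Rightarrow> 'a \<Rightarrow> bool) \<Rightarrow> 'a \<Rightarrow> 'a set set" where
  "local_components V E z = components_in E (V - {z})"

definition exterior :: "('a \<Rightarrow> 'a \<Rightarrow> bool) \<Rightarrow> 'a \<Rightarrow> 'a set \<Rightarrow> bool" where
  "exterior E z C \<longleftrightarrow> (\<exists>v\<in>C. \<not> E z v)"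

text \<open>Weight: sum of the (n-2) smallest orders of the non-exterior local components,
  n = number of local components (0 if n \<le> 2).\<close>
definition wt :: "'a set \<Rightarrow> ('a \<Rightarrow> 'a \<Rightarrow> bool) \<Rightarrow> 'a \<Rightarrow> nat" where
  "wt V E z = (let LC = local_components V E z;
                   n = card LC;
                   orders = sorted_list_of_multiset
                              (image_mset card (mset_set {C \<in> LC. \<not> exterior E z C}))
               in sum_list (take (n - 2) orders))"

definition is_path_graph :: "'a set \<Rightarrow> ('a \<Rightarrow> 'a \<Rightarrow> bool) \<Rightarrow> bool" where
  "is_path_graph S E \<longleftrightarrow> (\<exists>xs. xs \<noteq> [] \<and> distinct xs \<and> set xs = S \<and>
     (\<forall>u\<in>S. \<forall>v\<in>S. E u v \<longleftrightarrow>
        (\<exists>i. Suc i < length xs \<and> ({u, v} = {xs ! i, xs ! Suc i}))))"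

definition disjoint_union_of_paths :: "'a set \<Rightarrow> ('a \<Rightarrow> 'a \<Rightarrow> bool) \<Rightarrow> bool" where
  "disjoint_union_of_paths W E \<longleftrightarrow> (\<forall>C \<in> components_in E W. is_path_graph C E)"

end

theory Submission
  imports Defs
begin

(* A vertex of positive weight has at least three local components, so it
   is a cut vertex; we prove the statement for the subgraph induced by ANY set of cut
   vertices of a connected interval graph with interval model [l v, r v].
   (1) A vertex w is not a cut vertex if some vertex a (or adjacent pair a, c) absorbs
       all neighbours of w: then G - w stays connected.
   (2) Hence the interval of a cut vertex contains no other interval and is contained in
       no other interval; so on cut vertices l is injective and l, r are ordered alike,
       and no edge between a and c can pass over a cut vertex b with l a < l b < l c
       (otherwise a, c would absorb the neighbours of b).
   (3) Purely combinatorially: if a finite vertex set is linearly ordered by an injective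
       key so that no edge jumps over a vertex, every component of the induced subgraph,
       listed in key order, is a path. *)

subsection \<open>Reachability and components\<close>

lemma reach_refl: "reach_in E W u u"
  unfolding reach_in_def by simp

lemma reach_step: "u \<in> W \<Longrightarrow> v \<in> W \<Longrightarrow> E u v \<Longrightarrow> reach_in E W u v"
  unfolding reach_in_def by auto

lemma reach_trans: "reach_in E W u v \<Longrightarrow> reach_in E W v w \<Longrightarrow> reach_in E W u w"
  unfolding reach_in_def by auto

lemma reach_sym:
  assumes "symp E" and "reach_in E W u v"
  shows "reach_in E W v u"
  using assms(2) unfolding reach_in_def
  by (induction rule: rtranclp_induct)
     (auto intro: converse_rtranclp_into_rtranclp sympD[OF assms(1)])

lemma reach_mem: "reach_in E W u v \<Longrightarrow> u \<in> W \<Longrightarrow> v \<in> W"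
  unfolding reach_in_def by (induction rule: rtranclp_induct) auto

lemma simple_graph_symp: "simple_graph V E \<Longrightarrow> symp E"
  unfolding simple_graph_def by (auto intro: sympI)

lemma component_iff_reach:
  assumes "symp E" and "C \<in> components_in E W" and "u \<in> C"
  shows "v \<in> C \<longleftrightarrow> reach_in E W u v"
proof -
  obtain x where C: "C = {y. reach_in E W x y}"
    using assms(2) unfolding components_in_def by blast
  then have xu: "reach_in E W x u" and ux: "reach_in E W u x"
    using assms(3) reach_sym[OF assms(1)] by auto
  show ?thesis using C reach_trans[OF xu] reach_trans[OF ux] by blast
qed

lemma component_subset: "C \<in> components_in E W \<Longrightarrow> C \<subseteq> W"
  unfolding components_in_def by (auto dest: reach_mem)

lemma component_nonempty: "C \<in> components_in E W \<Longrightarrow> C \<noteq> {}"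
  unfolding components_in_def using reach_refl by fastforce

lemma card_components_le_one:
  assumes "symp E" and reach_a: "\<And>x. x \<in> W \<Longrightarrow> reach_in E W x a"
  shows "card (components_in E W) \<le> 1"
proof -
  have "components_in E W \<subseteq> {{y. reach_in E W a y}}"
  proof
    fix C assume "C \<in> components_in E W"
    then obtain x where x: "x \<in> W" and C: "C = {y. reach_in E W x y}"
      unfolding components_in_def by blast
    have xa: "reach_in E W x a" and ax: "reach_in E W a x"
      using reach_a[OF x] reach_sym[OF assms(1)] by auto
    show "C \<in> {{y. reach_in E W a y}}" using C reach_trans[OF xa] reach_trans[OF ax] by blast
  qed
  then show ?thesis using card_mono[of "{_}"] by fastforce
qed

lemma reach_avoiding:
  assumes conn: "connected_graph V E" and a: "a \<in> V"
    and nbr: "\<And>x. x \<in> V \<Longrightarrow> x \<noteq> w \<Longrightarrow> E x w \<Longrightarrow> reach_in E (V - {w}) x a"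
    and x: "x \<in> V" "x \<noteq> w"
  shows "reach_in E (V - {w}) x a"
proof -
  have "reach_in E V x a" using conn x a unfolding connected_graph_def by blast
  then have "x = w \<or> reach_in E (V - {w}) x a"
    unfolding reach_in_def
  proof (induction rule: converse_rtranclp_induct)
    case base
    then show ?case by simp
  next
    case (step x y)
    then have xy: "x \<in> V" "y \<in> V" "E x y" by auto
    consider "x = w" | "x \<noteq> w" "y = w" | "x \<noteq> w" "y \<noteq> w" "reach_in E (V - {w}) y a"
      using step.IH unfolding reach_in_def by blast
    then show ?case
    proof cases
      case 2
      then show ?thesis using nbr xy unfolding reach_in_def by blast
    next
      case 3
      then have "reach_in E (V - {w}) x y" using xy by (auto intro: reach_step)
      then have "reach_in E (V - {w}) x a" using 3(3) by (rule reach_trans)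
      then show ?thesis unfolding reach_in_def by simp
    qed simp
  qed
  then show ?thesis using x by simp
qed

subsection \<open>Cut vertices\<close>

definition cut_vertex :: "'a set \<Rightarrow> ('a \<Rightarrow> 'a \<Rightarrow> bool) \<Rightarrow> 'a \<Rightarrow> bool" where
  "cut_vertex V E z \<longleftrightarrow> z \<in> V \<and> 2 \<le> card (local_components V E z)"

text \<open>The weight only counts when there are at least three local components.\<close>
lemma positive_weight_cut_vertex: "z \<in> V \<Longrightarrow> 0 < wt V E z \<Longrightarrow> cut_vertex V E z"
  unfolding wt_def Let_def cut_vertex_def
  by (cases "card (local_components V E z) \<le> 2") auto

lemma absorbed_not_cut_vertex:
  assumes sg: "simple_graph V E" and conn: "connected_graph V E"
    and V: "a \<in> V" "c \<in> V" and ne: "a \<noteq> w" "c \<noteq> w" and ac: "a = c \<or> E a c"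
    and absorb: "\<And>x. x \<in> V \<Longrightarrow> x \<noteq> w \<Longrightarrow> E x w \<Longrightarrow> x = a \<or> x = c \<or> E x a \<or> E x c"
  shows "\<not> cut_vertex V E w"
proof -
  have sym: "symp E" using sg by (rule simple_graph_symp)
  have W: "a \<in> V - {w}" "c \<in> V - {w}" using V ne by auto
  have ca: "reach_in E (V - {w}) c a"
    using ac W sympD[OF sym] by (auto intro: reach_step reach_refl)
  have "reach_in E (V - {w}) x a" if "x \<in> V" "x \<noteq> w" "E x w" for x
  proof -
    have xW: "x \<in> V - {w}" using that by simp
    from absorb[OF that] show ?thesis
      using ca reach_refl reach_step[OF xW W(1)] reach_step[OF xW W(2)] reach_trans by metis
  qed
  then have "reach_in E (V - {w}) x a" if "x \<in> V - {w}" for x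
    using reach_avoiding[OF conn V(1)] that by blast
  then have "card (local_components V E w) \<le> 1"
    unfolding local_components_def by (rule card_components_le_one[OF sym])
  then show ?thesis unfolding cut_vertex_def by simp
qed

subsection \<open>Graphs ordered by a key with no jumping edges\<close>

lemma sorted_key_less_iff:
  fixes l :: "'a \<Rightarrow> 'b :: linorder"
  assumes "sorted_wrt (\<lambda>u v. l u < l v) xs" and "i < length xs" "j < length xs"
  shows "l (xs ! i) < l (xs ! j) \<longleftrightarrow> i < j"
proof
  assume "l (xs ! i) < l (xs ! j)"
  moreover have "\<not> l (xs ! i) < l (xs ! j)" if "j \<le> i"
    using that sorted_wrt_nth_less[OF assms(1), of j i] assms(2) by (cases "j = i") auto
  ultimately show "i < j" by linarith
next
  assume "i < j"
  then show "l (xs ! i) < l (xs ! j)" using sorted_wrt_nth_less[OF assms(1)] assms(3) by blast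
qed

lemma sorted_edge_consecutive:
  fixes l :: "'a \<Rightarrow> 'b :: linorder"
  assumes sorted: "sorted_wrt (\<lambda>u v. l u < l v) xs"
    and no_jump: "\<And>a b c. a \<in> set xs \<Longrightarrow> b \<in> set xs \<Longrightarrow> c \<in> set xs \<Longrightarrow>
                    l a < l b \<Longrightarrow> l b < l c \<Longrightarrow> \<not> E a c"
    and ij: "i < j" "j < length xs" and edge: "E (xs ! i) (xs ! j)"
  shows "j = Suc i"
proof (rule ccontr)
  assume "j \<noteq> Suc i"
  with ij have mid: "Suc i < j" "Suc i < length xs" by auto
  then have "l (xs ! i) < l (xs ! Suc i)" "l (xs ! Suc i) < l (xs ! j)"
    using sorted_key_less_iff[OF sorted] ij by auto
  then show False using no_jump[of "xs ! i" "xs ! Suc i" "xs ! j"] edge ij mid by simp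
qed

text \<open>Listing a component in key order, consecutive elements are adjacent: otherwise
  no edge leaves the part up to position i, yet the component is connected.\<close>
lemma sorted_component_consecutive_adjacent:
  fixes l :: "'a \<Rightarrow> 'b :: linorder"
  assumes sym: "symp E" and C: "C \<in> components_in E P" and set_xs: "set xs = C"
    and sorted: "sorted_wrt (\<lambda>u v. l u < l v) xs"
    and no_jump: "\<And>a b c. a \<in> C \<Longrightarrow> b \<in> C \<Longrightarrow> c \<in> C \<Longrightarrow>
                    l a < l b \<Longrightarrow> l b < l c \<Longrightarrow> \<not> E a c"
    and i: "Suc i < length xs"
  shows "E (xs ! i) (xs ! Suc i)"
proof (rule ccontr)
  assume gap: "\<not> E (xs ! i) (xs ! Suc i)"
  have xi: "xs ! i \<in> C" using i set_xs by auto
  have consec: "q = Suc p" if "p < q" "q < length xs" "E (xs ! p) (xs ! q)" for p q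
    using sorted_edge_consecutive[where E = E, OF sorted no_jump[folded set_xs] that] .
  have "y \<in> C \<and> l y \<le> l (xs ! i)" if "reach_in E P (xs ! i) y" for y
    using that unfolding reach_in_def
  proof (induction rule: rtranclp_induct)
    case (step y z)
    then have yC: "y \<in> C" and yz: "y \<in> P" "z \<in> P" "E y z" by auto
    have zC: "z \<in> C"
      using component_iff_reach[OF sym C yC] reach_step[where E = E, OF yz] by blast
    obtain p q where p: "p < length xs" "y = xs ! p" and q: "q < length xs" "z = xs ! q"
      using yC zC set_xs by (metis in_set_conv_nth)
    have "\<not> l (xs ! i) < l z"
    proof
      assume less: "l (xs ! i) < l z"
      then have order: "p < q" "i < q" "p \<le> i"
        using step.IH p q i sorted_key_less_iff[OF sorted] by (auto simp: not_less[symmetric])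
      then have "q = Suc p" using consec[of p q] p q yz(3) by simp
      with order have "p = i" "q = Suc i" by auto
      then show False using gap p q yz(3) by simp
    qed
    then show ?case using zC by simp
  qed (use xi in simp)
  moreover have "xs ! Suc i \<in> C" using i set_xs by auto
  then have "reach_in E P (xs ! i) (xs ! Suc i)"
    using component_iff_reach[OF sym C xi] by blast
  ultimately have "\<not> l (xs ! i) < l (xs ! Suc i)" by (blast dest: leD)
  then show False using sorted_key_less_iff[OF sorted, of i "Suc i"] i by simp
qed

lemma sorted_component_is_path:
  fixes l :: "'a \<Rightarrow> 'b :: linorder"
  assumes sym: "symp E" and irr: "\<And>v. \<not> E v v" and C: "C \<in> components_in E P"
    and xs: "distinct xs" "set xs = C" and sorted: "sorted_wrt (\<lambda>u v. l u < l v) xs"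
    and no_jump: "\<And>a b c. a \<in> C \<Longrightarrow> b \<in> C \<Longrightarrow> c \<in> C \<Longrightarrow>
                    l a < l b \<Longrightarrow> l b < l c \<Longrightarrow> \<not> E a c"
  shows "is_path_graph C E"
  unfolding is_path_graph_def
proof (intro exI conjI ballI)
  show "xs \<noteq> []" using xs component_nonempty[OF C] by auto
  show "distinct xs" "set xs = C" using xs by auto
  fix u v assume "u \<in> C" "v \<in> C"
  then obtain i j where i: "i < length xs" "u = xs ! i" and j: "j < length xs" "v = xs ! j"
    using xs by (metis in_set_conv_nth)
  have consec: "q = Suc p" if "p < q" "q < length xs" "E (xs ! p) (xs ! q)" for p q
    using sorted_edge_consecutive[where E = E, OF sorted no_jump[folded xs(2)] that] .
  show "E u v \<longleftrightarrow> (\<exists>k. Suc k < length xs \<and> {u, v} = {xs ! k, xs ! Suc k})"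
  proof
    assume uv: "E u v"
    then have "i \<noteq> j" using i j irr by blast
    then consider "i < j" | "j < i" by linarith
    then show "\<exists>k. Suc k < length xs \<and> {u, v} = {xs ! k, xs ! Suc k}"
    proof cases
      case 1
      then have "j = Suc i" using consec[of i j] uv i j by simp
      then show ?thesis using i j by blast
    next
      case 2
      then have "i = Suc j" using consec[of j i] sympD[OF sym uv] i j by simp
      then show ?thesis using i j by blast
    qed
  next
    assume "\<exists>k. Suc k < length xs \<and> {u, v} = {xs ! k, xs ! Suc k}"
    then obtain k where k: "Suc k < length xs" "{u, v} = {xs ! k, xs ! Suc k}" by blast
    have "E (xs ! k) (xs ! Suc k)"
      using sorted_component_consecutive_adjacent[OF sym C xs(2) sorted no_jump k(1)] .
    then show "E u v" using k(2) sympD[OF sym] by (auto simp: doubleton_eq_iff)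
  qed
qed

lemma exists_key_sorted_list:
  fixes l :: "'a \<Rightarrow> 'b :: linorder"
  assumes "finite C" and "inj_on l C"
  shows "\<exists>xs. distinct xs \<and> set xs = C \<and> sorted_wrt (\<lambda>u v. l u < l v) xs"
proof -
  obtain ys where ys: "distinct ys" "set ys = C" using assms(1) finite_distinct_list by blast
  define xs where "xs = sort_key l ys"
  have "distinct xs" "set xs = C" using ys by (simp_all add: xs_def)
  moreover have "distinct (map l xs)"
    using \<open>distinct xs\<close> \<open>set xs = C\<close> assms(2) by (simp add: distinct_map)
  then have "sorted_wrt (<) (map l xs)"
    by (simp add: strict_sorted_iff xs_def)
  ultimately show ?thesis by (auto simp: sorted_wrt_map)
qed

lemma no_jump_order_union_of_paths:
  fixes l :: "'a \<Rightarrow> 'b :: linorder"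
  assumes "finite P" and "inj_on l P" and sym: "symp E" and irr: "\<And>v. \<not> E v v"
    and no_jump: "\<And>a b c. a \<in> P \<Longrightarrow> b \<in> P \<Longrightarrow> c \<in> P \<Longrightarrow>
                    l a < l b \<Longrightarrow> l b < l c \<Longrightarrow> \<not> E a c"
  shows "disjoint_union_of_paths P E"
  unfolding disjoint_union_of_paths_def
proof
  fix C assume C: "C \<in> components_in E P"
  then have "C \<subseteq> P" by (rule component_subset)
  then obtain xs where "distinct xs" "set xs = C" "sorted_wrt (\<lambda>u v. l u < l v) xs"
    using exists_key_sorted_list[of C l] assms(1,2) finite_subset inj_on_subset by metis
  then show "is_path_graph C E"
    using sorted_component_is_path[OF sym irr C] no_jump \<open>C \<subseteq> P\<close> by blast
qed

subsection \<open>Cut vertices of interval graphs\<close>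

lemma closed_intervals_meet_iff:
  fixes a b c d :: real
  assumes "a \<le> b" and "c \<le> d"
  shows "{a..b} \<inter> {c..d} \<noteq> {} \<longleftrightarrow> a \<le> d \<and> c \<le> b"
  using assms by (auto simp: Int_atLeastAtMost)

locale connected_interval_model =
  fixes V :: "'a set" and E :: "'a \<Rightarrow> 'a \<Rightarrow> bool" and l r :: "'a \<Rightarrow> real"
  assumes simple: "simple_graph V E" and connected: "connected_graph V E"
    and interval: "\<And>v. v \<in> V \<Longrightarrow> l v \<le> r v"
    and adjacent_iff: "\<And>u v. u \<in> V \<Longrightarrow> v \<in> V \<Longrightarrow> u \<noteq> v \<Longrightarrow> E u v \<longleftrightarrow> l u \<le> r v \<and> l v \<le> r u"

lemma interval_graph_model:
  assumes "simple_graph V E" and "connected_graph V E" and "interval_graph V E"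
  obtains l r where "connected_interval_model V E l r"
proof -
  obtain l r :: "'a \<Rightarrow> real" where lr: "\<forall>v\<in>V. l v \<le> r v"
    and meet: "\<forall>u\<in>V. \<forall>v\<in>V. u \<noteq> v \<longrightarrow> (E u v \<longleftrightarrow> {l u..r u} \<inter> {l v..r v} \<noteq> {})"
    using assms(3) unfolding interval_graph_def by blast
  have "connected_interval_model V E l r"
    using assms(1,2) lr meet closed_intervals_meet_iff
    by unfold_locales auto
  then show thesis by (rule that)
qed

context connected_interval_model
begin

text \<open>A vertex whose interval lies inside the interval of another vertex a is absorbed
  by a, hence is not a cut vertex.\<close>
lemma nested_not_cut_vertex:
  assumes V: "a \<in> V" "b \<in> V" and "a \<noteq> b" and nested: "l a \<le> l b" "r b \<le> r a"
  shows "\<not> cut_vertex V E b"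
proof (rule absorbed_not_cut_vertex[OF simple connected V(1) V(1)])
  show "a \<noteq> b" "a \<noteq> b" "a = a \<or> E a a" using assms by auto
  fix x assume x: "x \<in> V" "x \<noteq> b" "E x b"
  then have "l x \<le> r b" "l b \<le> r x" using adjacent_iff V by auto
  then have "x \<noteq> a \<Longrightarrow> E x a" using adjacent_iff[OF x(1) V(1)] nested by auto
  then show "x = a \<or> x = a \<or> E x a \<or> E x a" by blast
qed

lemma cut_vertex_left_inj: "inj_on l {v. cut_vertex V E v}"
proof (rule inj_onI, rule ccontr)
  fix a b assume cut: "a \<in> {v. cut_vertex V E v}" "b \<in> {v. cut_vertex V E v}"
    and same: "l a = l b" and "a \<noteq> b"
  then have V: "a \<in> V" "b \<in> V" by (auto simp: cut_vertex_def)
  show False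
  proof (cases "r b \<le> r a")
    case True
    then show False using nested_not_cut_vertex[OF V] same \<open>a \<noteq> b\<close> cut by auto
  next
    case False
    then show False using nested_not_cut_vertex[OF V(2,1)] same \<open>a \<noteq> b\<close> cut by auto
  qed
qed

lemma cut_vertex_right_mono:
  assumes "a \<in> V" and "cut_vertex V E b" and "l a < l b"
  shows "r a < r b"
proof (rule ccontr)
  assume "\<not> r a < r b"
  moreover have "b \<in> V" "a \<noteq> b" using assms by (auto simp: cut_vertex_def)
  ultimately show False using nested_not_cut_vertex[of a b] assms by auto
qed

text \<open>No edge passes over a cut vertex b to a cut vertex c: the pair a, c would absorb
  all neighbours of b.\<close>
lemma no_edge_over_cut_vertex:
  assumes a: "a \<in> V" and b: "cut_vertex V E b" and c: "cut_vertex V E c"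
    and order: "l a < l b" "l b < l c"
  shows "\<not> E a c"
proof
  assume ac: "E a c"
  have V: "b \<in> V" "c \<in> V" and ne: "a \<noteq> b" "c \<noteq> b" "a \<noteq> c"
    using b c order by (auto simp: cut_vertex_def)
  have lc_ra: "l c \<le> r a" using adjacent_iff[OF a V(2) ne(3)] ac by simp
  have rb_rc: "r b < r c" using cut_vertex_right_mono[OF V(1) c order(2)] .
  have "\<not> cut_vertex V E b"
  proof (rule absorbed_not_cut_vertex[OF simple connected a V(2) ne(1,2)])
    show "a = c \<or> E a c" using ac by simp
    fix x assume x: "x \<in> V" "x \<noteq> b" "E x b"
    then have xb: "l x \<le> r b" "l b \<le> r x" using adjacent_iff V by auto
    show "x = a \<or> x = c \<or> E x a \<or> E x c"
    proof (cases "l x \<le> r a")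
      case True
      then have "x \<noteq> a \<Longrightarrow> E x a" using adjacent_iff[OF x(1) a] xb order by auto
      then show ?thesis by blast
    next
      case False
      then have "l c \<le> r x" using lc_ra interval[OF x(1)] by linarith
      then have "x \<noteq> c \<Longrightarrow> E x c" using adjacent_iff[OF x(1) V(2)] xb rb_rc by auto
      then show ?thesis by blast
    qed
  qed
  then show False using b by simp
qed

theorem cut_vertices_union_of_paths:
  assumes S: "S \<subseteq> {v. cut_vertex V E v}"
  shows "disjoint_union_of_paths S E"
proof (rule no_jump_order_union_of_paths)
  have "S \<subseteq> V" using S by (auto simp: cut_vertex_def)
  then show "finite S" using simple finite_subset unfolding simple_graph_def by blast
  show "inj_on l S" using cut_vertex_left_inj S by (rule inj_on_subset)
  show "symp E" using simple by (rule simple_graph_symp)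
  show "\<And>v. \<not> E v v" using simple unfolding simple_graph_def by blast
  show "\<And>a b c. a \<in> S \<Longrightarrow> b \<in> S \<Longrightarrow> c \<in> S \<Longrightarrow> l a < l b \<Longrightarrow> l b < l c \<Longrightarrow> \<not> E a c"
    using no_edge_over_cut_vertex S \<open>S \<subseteq> V\<close> by blast
qed

end

theorem theorem2p4:
  fixes V :: "'a set" and E :: "'a \<Rightarrow> 'a \<Rightarrow> bool"
  assumes "simple_graph V E" and "connected_graph V E" and "interval_graph V E"
  shows "disjoint_union_of_paths {v \<in> V. wt V E v > 0} E"
proof -
  obtain l r where "connected_interval_model V E l r"
    by (rule interval_graph_model[OF assms])
  then interpret connected_interval_model V E l r .
  have "{v \<in> V. wt V E v > 0} \<subseteq> {v. cut_vertex V E v}"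
    by (auto intro: positive_weight_cut_vertex)
  then show ?thesis by (rule cut_vertices_union_of_paths)
qed

end
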